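(* Let $G$ and $H$ be graphs with at least two vertices each, with $V(G)\cap V(H)=\emptyset$, and let $K$ be a clique of $G$. Let $\{u_1,u_2\}$ be a top-two of $H$, and suppose there exists an acyclic digraph $D'$ with vertex set $V(G)\cup\{u_1,u_2\}$ such that $C(D')$ is $G$ together with $u_1,u_2$ as isolated vertices. If either $H$ has no edges or $H$ has no isolated vertices, then there exists an acyclic digraph $D$ such that (i) $C(D)=(G\ltimes_K H)\cup I_2$ if $H$ has no edges, and $C(D)=(G\ltimes_K H)\cup I_{k(H)}$ if $H$ has no isolated vertices; and (ii) $D$ has an acyclic ordering whose first $|V(G)|+2$ terms induce the digraph $D'$.
   Context: All graphs are finite and simple. For a digraph $D$, its competition graph $C(D)$ is the graph with vertex set $V(D)$ in which two distinct vertices $u,v$ are adjacent iff there is a vertex $x$ with arcs $(u,x),(v,x)\in A(D)$. The competition number $k(G)$ is the smallest nonnegative integer $k$ such that $G$ together with $k$ new isolated vertices is the competition graph of an acyclic digraph. $I_k$ is the edgeless graph on $k$ vertices; $X\cup I_k$ denotes the disjoint union of $X$ with $k$ new isolated vertices. An acyclic ordering of a digraph $D$ is an ordering of its vertices such that every arc goes from an earlier to a later vertex. A clique is a set of pairwise adjacent vertices (the empty set counts). For vertex-disjoint graphs $G,H$ and a clique $K$ of $G$, $G\ltimes_K H$ is the graph with vertex set $V(G)\cup V(H)$ and edge set $E(G)\cup E(H)\cup\{uv: u\in K, v\in V(H)\}$. For a graph $H$, a set $\{u,v\}$ of two distinct vertices is a top-two of $H$ if there exists an acyclic digraph $D$ with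 $C(D)=H\cup I_{k(H)}$ having an acyclic ordering whose first and second vertices are $u$ and $v$. *)

theory Defs
  imports Main
begin

text \<open>A finite simple graph: finite vertex set V, edge relation E (symmetric, irreflexive,
  contained in V x V). An edge uv is represented by both pairs (u,v) and (v,u).\<close>
definition graph :: "'a set \<Rightarrow> ('a \<times> 'a) set \<Rightarrow> bool" where
  "graph V E \<longleftrightarrow> finite V \<and> E \<subseteq> V \<times> V \<and> sym E \<and> irrefl E"

definition digraph :: "'a set \<Rightarrow> ('a \<times> 'a) set \<Rightarrow> bool" where
  "digraph V A \<longleftrightarrow> finite V \<and> A \<subseteq> V \<times> V"

definition acyclic_digraph :: "'a set \<Rightarrow> ('a \<times> 'a) set \<Rightarrow> bool" where
  "acyclic_digraph V A \<longleftrightarrow> digraph V A \<and> acyclic A"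

definition comp_edges :: "'a set \<Rightarrow> ('a \<times> 'a) set \<Rightarrow> ('a \<times> 'a) set" where
  "comp_edges V A = {(u, v). u \<in> V \<and> v \<in> V \<and> u \<noteq> v \<and> (\<exists>x. (u, x) \<in> A \<and> (v, x) \<in> A)}"

definition comp_graph_is :: "'a set \<Rightarrow> ('a \<times> 'a) set \<Rightarrow> 'a set \<Rightarrow> ('a \<times> 'a) set \<Rightarrow> 'a set \<Rightarrow> bool" where
  "comp_graph_is VD A V E I \<longleftrightarrow> finite I \<and> I \<inter> V = {} \<and> VD = V \<union> I \<and> comp_edges VD A = E"

definition competition_number :: "'a set \<Rightarrow> ('a \<times> 'a) set \<Rightarrow> nat" where
  "competition_number V E = (LEAST k. \<exists>I A. card I = k \<and> acyclic_digraph (V \<union> I) A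
       \<and> comp_graph_is (V \<union> I) A V E I)"

definition acyclic_ordering :: "'a set \<Rightarrow> ('a \<times> 'a) set \<Rightarrow> 'a list \<Rightarrow> bool" where
  "acyclic_ordering V A xs \<longleftrightarrow> distinct xs \<and> set xs = V \<and>
     (\<forall>i j. i < length xs \<longrightarrow> j < length xs \<longrightarrow> (xs ! i, xs ! j) \<in> A \<longrightarrow> i < j)"

definition is_clique :: "'a set \<Rightarrow> ('a \<times> 'a) set \<Rightarrow> 'a set \<Rightarrow> bool" where
  "is_clique V E K \<longleftrightarrow> K \<subseteq> V \<and> (\<forall>u\<in>K. \<forall>v\<in>K. u \<noteq> v \<longrightarrow> (u, v) \<in> E)"

definition ltimes_V :: "'a set \<Rightarrow> 'a set \<Rightarrow> 'a set" where
  "ltimes_V VG VH = VG \<union> VH"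

definition ltimes_E :: "('a \<times> 'a) set \<Rightarrow> 'a set \<Rightarrow> 'a set \<Rightarrow> ('a \<times> 'a) set \<Rightarrow> ('a \<times> 'a) set" where
  "ltimes_E EG K VH EH = EG \<union> EH \<union> {(u, v). u \<in> K \<and> v \<in> VH} \<union> {(v, u). u \<in> K \<and> v \<in> VH}"

definition top_two :: "'a set \<Rightarrow> ('a \<times> 'a) set \<Rightarrow> 'a \<Rightarrow> 'a \<Rightarrow> bool" where
  "top_two V E u v \<longleftrightarrow> u \<noteq> v \<and>
     (\<exists>I A xs. card I = competition_number V E \<and> acyclic_digraph (V \<union> I) A
        \<and> comp_graph_is (V \<union> I) A V E I
        \<and> acyclic_ordering (V \<union> I) A xs \<and> 2 \<le> length xs \<and> xs ! 0 = u \<and> xs ! 1 = v)"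

definition isolated_free :: "'a set \<Rightarrow> ('a \<times> 'a) set \<Rightarrow> bool" where
  "isolated_free V E \<longleftrightarrow> (\<forall>v\<in>V. \<exists>w. (v, w) \<in> E)"

end

theory Submission
  imports Defs
begin

text \<open>Take a realization of H together with k(H) isolated vertices whose acyclic ordering starts
  with the top-two u1, u2, rename its isolated vertices away from V(G), and glue it to D' along
  u1, u2: keep the arcs of D', the arcs of the realization of H that do not end in u1 or u2 (the
  only other possible arc, u1 to u2, is dropped, but u1 is the only predator of u2), and let every
  vertex of K prey on those prey of H whose predators all lie in H. An acyclic ordering of D'
  followed by the remainder of the ordering of H is an acyclic ordering of the glued digraph.
  If H has no isolated vertices, every vertex of H shares a prey with a neighbour and all
  predators of that prey lie in H. If H is edgeless, k(H) = 0, and H with two new isolated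
  vertices is realized by letting each vertex of the top-two ordering prey on the vertex two
  places later.\<close>

lemma acyclic_ordering_iff_sorted_wrt:
  "acyclic_ordering V A xs \<longleftrightarrow> distinct xs \<and> set xs = V \<and>
     sorted_wrt (\<lambda>x y. (y, x) \<notin> A) xs \<and> (\<forall>x\<in>V. (x, x) \<notin> A)"
proof
  assume h: "acyclic_ordering V A xs"
  then have "sorted_wrt (\<lambda>x y. (y, x) \<notin> A) xs"
    unfolding sorted_wrt_iff_nth_less acyclic_ordering_def by (meson less_asym less_trans)
  moreover have "(x, x) \<notin> A" if "x \<in> V" for x
    using h that unfolding acyclic_ordering_def by (metis in_set_conv_nth less_irrefl)
  ultimately show "distinct xs \<and> set xs = V \<and> sorted_wrt (\<lambda>x y. (y, x) \<notin> A) xs \<and> (\<forall>x\<in>V. (x, x) \<notin> A)"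
    using h unfolding acyclic_ordering_def by blast
next
  assume h: "distinct xs \<and> set xs = V \<and> sorted_wrt (\<lambda>x y. (y, x) \<notin> A) xs \<and> (\<forall>x\<in>V. (x, x) \<notin> A)"
  show "acyclic_ordering V A xs"
    unfolding acyclic_ordering_def
  proof (intro conjI allI impI)
    fix i j assume ij: "i < length xs" "j < length xs" "(xs ! i, xs ! j) \<in> A"
    show "i < j"
    proof (rule ccontr)
      assume "\<not> i < j"
      then consider "i = j" | "j < i" by linarith
      then show False
        by cases (use h ij in \<open>auto simp: sorted_wrt_iff_nth_less\<close>)
    qed
  qed (use h in auto)
qed

lemma acyclic_ordering_exists:
  assumes "finite V" "acyclic A"
  shows "\<exists>xs. acyclic_ordering V A xs"
  using assms(1)
proof (induction rule: finite_psubset_induct)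
  case (psubset V)
  show ?case
  proof (cases "V = {}")
    case True
    then show ?thesis by (auto simp: acyclic_ordering_def)
  next
    case False
    then obtain x where x: "x \<in> V" by blast
    have "finite (A \<inter> V \<times> V)" using psubset(1) by simp
    moreover have "acyclic (A \<inter> V \<times> V)" using assms(2) by (rule acyclic_subset) auto
    ultimately have "wf (A \<inter> V \<times> V)" by (rule finite_acyclic_wf)
    then obtain z where z: "z \<in> V" and source: "\<forall>y. (y, z) \<in> A \<inter> V \<times> V \<longrightarrow> y \<notin> V"
      using wf_eq_minimal[THEN iffD1, rule_format, OF _ x] by blast
    have "V - {z} \<subset> V" using z by blast
    then obtain ys where "acyclic_ordering (V - {z}) A ys"
      using psubset(2) by blast
    then have ys: "distinct ys" "set ys = V - {z}" "sorted_wrt (\<lambda>x y. (y, x) \<notin> A) ys"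
      by (simp_all add: acyclic_ordering_iff_sorted_wrt)
    have "(y, y) \<notin> A" for y
      using assms(2) unfolding acyclic_def by (blast intro: r_into_trancl')
    moreover have "\<forall>y\<in>set ys. (y, z) \<notin> A"
      using ys(2) source z by blast
    ultimately have "acyclic_ordering V A (z # ys)"
      unfolding acyclic_ordering_iff_sorted_wrt using ys z by auto
    then show ?thesis ..
  qed
qed

lemma acyclic_ordering_imp_acyclic:
  assumes ord: "acyclic_ordering V A xs" and A: "A \<subseteq> V \<times> V"
  shows "acyclic A"
proof -
  define pos where "pos x = (SOME i. i < length xs \<and> xs ! i = x)" for x
  have pos: "pos x < length xs \<and> xs ! pos x = x" if "x \<in> V" for x
    unfolding pos_def
    by (rule someI_ex) (use ord that in \<open>auto simp: acyclic_ordering_def in_set_conv_nth\<close>)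
  have "A \<subseteq> inv_image less_than pos"
  proof
    fix p assume "p \<in> A"
    moreover obtain a b where "p = (a, b)" by force
    ultimately show "p \<in> inv_image less_than pos"
      using ord A pos[of a] pos[of b] by (auto simp: acyclic_ordering_def)
  qed
  then have "wf A" by (rule wf_subset[OF wf_inv_image[OF wf_less_than]])
  then show ?thesis by (rule wf_acyclic)
qed

lemma acyclic_ordering_subset:
  assumes "acyclic_ordering V A xs" "B \<inter> V \<times> V \<subseteq> A"
  shows "acyclic_ordering V B xs"
  using assms nth_mem unfolding acyclic_ordering_def by blast

lemma acyclic_ordering_Cons:
  assumes "acyclic_ordering V A (x # xs)"
  shows "acyclic_ordering (set xs) A xs"
  using assms by (auto simp: acyclic_ordering_iff_sorted_wrt)

lemma acyclic_ordering_append: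
  assumes "acyclic_ordering V A xs" "acyclic_ordering W A ys" "V \<inter> W = {}"
    and "\<forall>x\<in>V. \<forall>y\<in>W. (y, x) \<notin> A"
  shows "acyclic_ordering (V \<union> W) A (xs @ ys)"
  using assms by (auto simp: acyclic_ordering_iff_sorted_wrt sorted_wrt_append)

lemma acyclic_ordering_image:
  assumes inj: "inj_on f V" and A: "A \<subseteq> V \<times> V" and ord: "acyclic_ordering V A xs"
  shows "acyclic_ordering (f ` V) (map_prod f f ` A) (map f xs)"
proof -
  have arc: "(f y, f x) \<in> map_prod f f ` A \<longleftrightarrow> (y, x) \<in> A" if "x \<in> V" "y \<in> V" for x y
  proof
    assume "(f y, f x) \<in> map_prod f f ` A"
    then obtain a b where ab: "(a, b) \<in> A" "f a = f y" "f b = f x" by auto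
    moreover have "a \<in> V" "b \<in> V" using ab(1) A by auto
    ultimately show "(y, x) \<in> A" using inj that by (metis inj_onD)
  qed force
  have xs: "distinct xs" "set xs = V" "sorted_wrt (\<lambda>x y. (y, x) \<notin> A) xs" "\<forall>x\<in>V. (x, x) \<notin> A"
    using ord unfolding acyclic_ordering_iff_sorted_wrt by blast+
  have "sorted_wrt (\<lambda>x y. (f y, f x) \<notin> map_prod f f ` A) xs"
    by (rule sorted_wrt_mono_rel[OF _ xs(3)]) (use arc xs(2) in simp)
  moreover have "(z, z) \<notin> map_prod f f ` A" if "z \<in> f ` V" for z
  proof -
    obtain x where "x \<in> V" "z = f x" using \<open>z \<in> f ` V\<close> by blast
    then show ?thesis using arc xs(4) by simp
  qed
  ultimately show ?thesis
    using xs inj by (simp add: acyclic_ordering_iff_sorted_wrt distinct_map sorted_wrt_map)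
qed

lemma acyclic_ordering_arc_into_first_two:
  assumes "acyclic_ordering V A (u1 # u2 # rest)" "A \<subseteq> V \<times> V" "(y, x) \<in> A" "x \<in> {u1, u2}"
  shows "y = u1 \<and> x = u2"
  using assms by (auto simp: acyclic_ordering_iff_sorted_wrt)

lemma comp_edges_mono:
  "V \<subseteq> V' \<Longrightarrow> A \<subseteq> A' \<Longrightarrow> comp_edges V A \<subseteq> comp_edges V' A'"
  unfolding comp_edges_def by blast

lemma comp_edges_image:
  assumes inj: "inj_on f V" and A: "A \<subseteq> V \<times> V"
  shows "comp_edges (f ` V) (map_prod f f ` A) = map_prod f f ` comp_edges V A"
proof -
  have out_arc: "(f a, z) \<in> map_prod f f ` A \<longleftrightarrow> (\<exists>x. (a, x) \<in> A \<and> z = f x)" if "a \<in> V" for a z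
  proof
    assume "(f a, z) \<in> map_prod f f ` A"
    then obtain a' x where "(a', x) \<in> A" "f a' = f a" "z = f x" by auto
    moreover have "a' = a" using calculation(1,2) A inj that by (auto dest: inj_onD)
    ultimately show "\<exists>x. (a, x) \<in> A \<and> z = f x" by blast
  qed force
  have edge: "(f a, f b) \<in> comp_edges (f ` V) (map_prod f f ` A) \<longleftrightarrow> (a, b) \<in> comp_edges V A"
    if "a \<in> V" "b \<in> V" for a b
    using that out_arc[of a] out_arc[of b] inj_on_eq_iff[OF inj] A by (auto simp: comp_edges_def) blast
  have vertices: "comp_edges U B \<subseteq> U \<times> U" for U B
    by (auto simp: comp_edges_def)
  show ?thesis
  proof (intro equalityI subsetI)
    fix p assume p: "p \<in> comp_edges (f ` V) (map_prod f f ` A)"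
    then obtain a b where "p = (f a, f b)" "a \<in> V" "b \<in> V"
      using vertices by blast
    then show "p \<in> map_prod f f ` comp_edges V A"
      using p edge by force
  next
    fix p assume "p \<in> map_prod f f ` comp_edges V A"
    then obtain a b where "p = (f a, f b)" "(a, b) \<in> comp_edges V A"
      by force
    moreover have "a \<in> V" "b \<in> V"
      using calculation(2) vertices by blast+
    ultimately show "p \<in> comp_edges (f ` V) (map_prod f f ` A)"
      using edge by simp
  qed
qed

lemma competition_number_edgeless:
  assumes "finite V" shows "competition_number V {} = 0"
  unfolding competition_number_def
proof (rule Least_eq_0)
  have "acyclic ({} :: ('a \<times> 'a) set)" by (rule wf_acyclic) simp
  then show "\<exists>I A. card I = 0 \<and> acyclic_digraph (V \<union> I) A \<and> comp_graph_is (V \<union> I) A V {} I"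
    using assms
    by (intro exI[of _ "{}"])
       (auto simp: acyclic_digraph_def digraph_def comp_graph_is_def comp_edges_def)
qed

lemma finite_renaming_away:
  assumes "infinite (UNIV :: 'a set)" "finite S" "finite Y"
  obtains f :: "'a \<Rightarrow> 'a" where "inj_on f S" "\<forall>x\<in>S - Y. f x = x" "f ` S \<inter> Y = {}"
proof -
  obtain J where J: "finite J" "card J = card (S \<inter> Y)" "(S \<union> Y) \<inter> J = {}"
    using finite_arbitrarily_large_disj[OF assms(1), of "S \<union> Y"] assms(2,3) by auto
  then obtain h where h: "bij_betw h (S \<inter> Y) J"
    using finite_same_card_bij[of "S \<inter> Y" J] assms(2) by auto
  define f where "f x = (if x \<in> Y then h x else x)" for x
  have "inj_on f (S \<inter> Y)"
    using bij_betw_imp_inj_on[OF h] by (simp add: f_def inj_on_def)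
  moreover have "inj_on f (S - Y)"
    by (simp add: f_def inj_on_def)
  moreover have "f ` (S \<inter> Y) \<subseteq> J" "f ` (S - Y) \<subseteq> S"
    using bij_betw_imp_surj_on[OF h] by (auto simp: f_def)
  ultimately have "inj_on f ((S \<inter> Y) \<union> (S - Y))"
    using J(3) by (subst inj_on_Un) blast
  then have "inj_on f S"
    by (simp add: Int_Diff_Un)
  moreover have "f ` S \<inter> Y = {}"
    using \<open>f ` (S \<inter> Y) \<subseteq> J\<close> J(3) by (auto simp: f_def)
  ultimately show ?thesis
    using that by (simp add: f_def)
qed

lemma top_two_realization_avoiding:
  fixes V :: "'a set"
  assumes inf: "infinite (UNIV :: 'a set)" and top: "top_two V E u1 u2" and E: "E \<subseteq> V \<times> V"
    and X: "finite X" "V \<inter> X = {}" "u1 \<notin> X" "u2 \<notin> X"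
  obtains I AH rest where "card I = competition_number V E" "I \<inter> V = {}" "I \<inter> X = {}"
    "AH \<subseteq> (V \<union> I) \<times> (V \<union> I)" "comp_edges (V \<union> I) AH = E"
    "acyclic_ordering (V \<union> I) AH (u1 # u2 # rest)"
proof -
  obtain I AH xs where I: "card I = competition_number V E" "I \<inter> V = {}"
    and AH: "AH \<subseteq> (V \<union> I) \<times> (V \<union> I)" "comp_edges (V \<union> I) AH = E"
    and ord: "acyclic_ordering (V \<union> I) AH xs" and xs: "2 \<le> length xs" "xs ! 0 = u1" "xs ! 1 = u2"
    using top unfolding top_two_def comp_graph_is_def acyclic_digraph_def digraph_def by blast
  have xs_Cons: "xs = u1 # u2 # drop 2 xs"
    using xs by (cases xs; cases "tl xs") auto
  have set_xs: "set xs = V \<union> I"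
    using ord by (simp add: acyclic_ordering_def)
  then have fin: "finite (V \<union> I)"
    by (metis List.finite_set)
  obtain f where inj: "inj_on f (V \<union> I)" and fixed: "\<forall>x\<in>(V \<union> I) - X. f x = x"
    and away: "f ` (V \<union> I) \<inter> X = {}"
    by (rule finite_renaming_away[OF inf fin X(1)])
  have fV: "f v = v" if "v \<in> V" for v
    using fixed that X(2) by auto
  have image: "f ` (V \<union> I) = V \<union> f ` I"
    using fV by (auto simp: image_Un)
  have disjoint: "f ` I \<inter> V = {}"
  proof -
    have "x \<in> V" if "x \<in> I" "f x \<in> V" for x
      using inj_onD[OF inj, of "f x" x] fV that by auto
    then show ?thesis using I(2) by blast
  qed
  have card: "card (f ` I) = card I"
    using inj by (auto intro: card_image inj_on_subset)
  have "map_prod f f ` E = id ` E"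
    by (rule image_cong) (use E fV in auto)
  then have edges: "comp_edges (V \<union> f ` I) (map_prod f f ` AH) = E"
    using comp_edges_image[OF inj AH(1)] AH(2) image by simp
  have "{u1, u2} \<subseteq> V \<union> I"
    using set_xs by (subst (asm) xs_Cons) auto
  then have "f u1 = u1" "f u2 = u2"
    using fixed X(3,4) by auto
  then have ordering: "acyclic_ordering (V \<union> f ` I) (map_prod f f ` AH) (u1 # u2 # map f (drop 2 xs))"
    using acyclic_ordering_image[OF inj AH(1) ord] xs_Cons image by (metis list.simps(9))
  have arcs: "map_prod f f ` AH \<subseteq> (V \<union> f ` I) \<times> (V \<union> f ` I)"
    using AH(1) image by fastforce
  have "f ` I \<inter> X = {}"
    using away by blast
  then show ?thesis
    using that[OF _ disjoint _ arcs edges ordering] card I(1) by simp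
qed

text \<open>Each vertex preys on the vertex two places later: no two vertices share a prey, and the
  first two vertices are nobody's prey.\<close>
definition skip_two_arcs :: "'a list \<Rightarrow> ('a \<times> 'a) set" where
  "skip_two_arcs ys = {(ys ! j, ys ! (j + 2)) | j. j + 2 < length ys}"

lemma skip_two_arcs_subset: "skip_two_arcs ys \<subseteq> set ys \<times> set ys"
  by (auto simp: skip_two_arcs_def)

lemma skip_two_arcs_into:
  assumes "distinct ys" "(y, ys ! (j + 2)) \<in> skip_two_arcs ys" "j + 2 < length ys"
  shows "y = ys ! j"
proof -
  obtain i where i: "i + 2 < length ys" "y = ys ! i" "ys ! (j + 2) = ys ! (i + 2)"
    using assms(2) by (auto simp: skip_two_arcs_def)
  then have "j = i"
    using nth_eq_iff_index_eq[OF assms(1) assms(3) i(1)] by simp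
  then show ?thesis using i(2) by simp
qed

lemma acyclic_ordering_skip_two_arcs:
  assumes "distinct ys"
  shows "acyclic_ordering (set ys) (skip_two_arcs ys) ys"
  unfolding acyclic_ordering_def
proof (intro conjI allI impI)
  fix i k assume ik: "i < length ys" "k < length ys" "(ys ! i, ys ! k) \<in> skip_two_arcs ys"
  then obtain j where j: "j + 2 < length ys" "ys ! i = ys ! j" "ys ! k = ys ! (j + 2)"
    by (auto simp: skip_two_arcs_def)
  then have "i = j" "k = j + 2"
    using nth_eq_iff_index_eq[OF assms] ik(1,2) by (metis add_lessD1)+
  then show "i < k" by simp
qed (use assms in auto)

lemma comp_edges_skip_two_arcs:
  assumes "distinct ys"
  shows "comp_edges V (skip_two_arcs ys) = {}"
proof -
  have "a = b" if a: "(a, x) \<in> skip_two_arcs ys" and b: "(b, x) \<in> skip_two_arcs ys" for a b x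
  proof -
    obtain j where "j + 2 < length ys" "a = ys ! j" "x = ys ! (j + 2)"
      using a by (auto simp: skip_two_arcs_def)
    then show ?thesis
      using skip_two_arcs_into[OF assms] b by blast
  qed
  then show ?thesis by (auto simp: comp_edges_def)
qed

text \<open>The last clause asks every vertex of H for a prey all of whose predators lie in H; making
  the clique K prey on these vertices as well creates exactly the edges between K and H.\<close>
definition prey_realization ::
    "'a set \<Rightarrow> ('a \<times> 'a) set \<Rightarrow> 'a \<Rightarrow> 'a \<Rightarrow> 'a set \<Rightarrow> ('a \<times> 'a) set \<Rightarrow> bool" where
  "prey_realization V E u1 u2 I A \<longleftrightarrow> I \<inter> V = {} \<and> A \<subseteq> (V \<union> I) \<times> (V \<union> I)
     \<and> comp_edges (V \<union> I) A = E \<and> (\<exists>rest. acyclic_ordering (V \<union> I) A (u1 # u2 # rest))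
     \<and> (\<forall>v\<in>V. \<exists>x. x \<notin> {u1, u2} \<and> (v, x) \<in> A \<and> (\<forall>y. (y, x) \<in> A \<longrightarrow> y \<in> V))"

lemma edgeless_prey_realization:
  fixes V :: "'a set"
  assumes inf: "infinite (UNIV :: 'a set)" and top: "top_two V {} u1 u2"
    and X: "finite X" "V \<inter> X = {}" "u1 \<notin> X" "u2 \<notin> X"
  obtains I AH where "card I = 2" "I \<inter> X = {}" "prey_realization V {} u1 u2 I AH"
proof -
  obtain I0 AH0 rest where I0: "card I0 = competition_number V {}"
    and "I0 \<inter> V = {}" "I0 \<inter> X = {}" "AH0 \<subseteq> (V \<union> I0) \<times> (V \<union> I0)" "comp_edges (V \<union> I0) AH0 = {}"
    and ord: "acyclic_ordering (V \<union> I0) AH0 (u1 # u2 # rest)"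
    by (rule top_two_realization_avoiding[OF inf top empty_subsetI X])
  define xs where "xs = u1 # u2 # rest"
  have xs: "distinct xs" "set xs = V \<union> I0"
    using ord by (simp_all add: xs_def acyclic_ordering_def)
  then have "finite V" "finite I0"
    by (metis List.finite_set finite_Un)+
  then have "I0 = {}"
    using I0 competition_number_edgeless[OF \<open>finite V\<close>] card_0_eq by metis
  with xs have set_xs: "set xs = V" by simp
  obtain J where J: "finite J" "card J = 2" "(V \<union> X) \<inter> J = {}"
    using finite_arbitrarily_large_disj[OF inf] \<open>finite V\<close> X(1) by (metis finite_UnI)
  then obtain i1 i2 where i12: "J = {i1, i2}" "i1 \<noteq> i2"
    by (meson card_2_iff)
  define ys where "ys = xs @ [i1, i2]"
  have ys: "distinct ys" "set ys = V \<union> J"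
    using xs(1) set_xs J(3) i12 by (auto simp: ys_def)
  have ys_nth: "ys ! k = xs ! k" if "k < length xs" for k
    using that by (simp add: ys_def nth_append)
  have prey: "\<exists>x. x \<notin> {u1, u2} \<and> (v, x) \<in> skip_two_arcs ys
      \<and> (\<forall>y. (y, x) \<in> skip_two_arcs ys \<longrightarrow> y \<in> V)" if "v \<in> V" for v
  proof -
    obtain k where k: "k < length xs" "v = xs ! k"
      using \<open>v \<in> V\<close> set_xs by (metis in_set_conv_nth)
    have k2: "k + 2 < length ys" using k(1) by (simp add: ys_def)
    have "(ys ! k, ys ! (k + 2)) \<in> skip_two_arcs ys"
      using k2 unfolding skip_two_arcs_def by blast
    then have arc: "(v, ys ! (k + 2)) \<in> skip_two_arcs ys"
      using k ys_nth by simp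
    have "0 < length ys" "1 < length ys" using k2 by linarith+
    then have "ys ! (k + 2) \<noteq> ys ! 0" "ys ! (k + 2) \<noteq> ys ! 1"
      using nth_eq_iff_index_eq[OF ys(1) k2] by simp_all
    then have "ys ! (k + 2) \<notin> {u1, u2}"
      by (simp add: ys_def xs_def)
    moreover have "y \<in> V" if "(y, ys ! (k + 2)) \<in> skip_two_arcs ys" for y
      using skip_two_arcs_into[OF ys(1) that k2] k ys_nth set_xs by auto
    ultimately show ?thesis using arc by blast
  qed
  have "ys = u1 # u2 # (rest @ [i1, i2])"
    by (simp add: ys_def xs_def)
  then have "prey_realization V {} u1 u2 J (skip_two_arcs ys)"
    unfolding prey_realization_def
    using acyclic_ordering_skip_two_arcs[OF ys(1)] comp_edges_skip_two_arcs[OF ys(1)]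
      skip_two_arcs_subset[of ys] ys(2) J(3) prey by auto
  then show ?thesis
    using that J by blast
qed

lemma isolated_free_prey_realization:
  fixes V :: "'a set"
  assumes inf: "infinite (UNIV :: 'a set)" and top: "top_two V E u1 u2"
    and E: "E \<subseteq> V \<times> V" and iso: "isolated_free V E"
    and X: "finite X" "V \<inter> X = {}" "u1 \<notin> X" "u2 \<notin> X"
  obtains I AH where "card I = competition_number V E" "I \<inter> X = {}"
    "prey_realization V E u1 u2 I AH"
proof -
  obtain I AH rest where I: "card I = competition_number V E" "I \<inter> V = {}" "I \<inter> X = {}"
    and AH: "AH \<subseteq> (V \<union> I) \<times> (V \<union> I)" "comp_edges (V \<union> I) AH = E"
    and ord: "acyclic_ordering (V \<union> I) AH (u1 # u2 # rest)"
    by (rule top_two_realization_avoiding[OF inf top E X])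
  have prey: "\<exists>x. x \<notin> {u1, u2} \<and> (v, x) \<in> AH \<and> (\<forall>y. (y, x) \<in> AH \<longrightarrow> y \<in> V)"
    if "v \<in> V" for v
  proof -
    obtain w where "(v, w) \<in> E"
      using iso \<open>v \<in> V\<close> by (auto simp: isolated_free_def)
    then obtain x where x: "v \<noteq> w" "(v, x) \<in> AH" "(w, x) \<in> AH"
      using AH(2) by (auto simp: comp_edges_def)
    have "x \<notin> {u1, u2}"
      using acyclic_ordering_arc_into_first_two[OF ord AH(1)] x by blast
    moreover have "y \<in> V" if "(y, x) \<in> AH" for y
    proof (cases "y = v")
      case False
      then have "(y, v) \<in> comp_edges (V \<union> I) AH"
        using that x(2) AH(1) by (auto simp: comp_edges_def)
      then show ?thesis using AH(2) E by auto
    qed (use \<open>v \<in> V\<close> in simp)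
    ultimately show ?thesis using x(2) by blast
  qed
  have "prey_realization V E u1 u2 I AH"
    unfolding prey_realization_def using I(2) AH ord prey by blast
  then show ?thesis
    using that I by blast
qed

locale ltimes_gluing =
  fixes VG VH K I :: "'a set" and EG EH A' AH :: "('a \<times> 'a) set" and u1 u2 :: 'a
  assumes D': "acyclic_digraph (VG \<union> {u1, u2}) A'"
    and CD': "comp_edges (VG \<union> {u1, u2}) A' = EG"
    and K: "is_clique VG EG K"
    and disjoint: "VG \<inter> (VH \<union> I) = {}"
    and H: "prey_realization VH EH u1 u2 I AH"
begin

definition front :: "'a set" where
  "front = VG \<union> {u1, u2}"

definition prey :: "'a set" where
  "prey = {x \<in> VH \<union> I - {u1, u2}. \<forall>y. (y, x) \<in> AH \<longrightarrow> y \<in> VH}"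

definition arcs :: "('a \<times> 'a) set" where
  "arcs = A' \<union> (AH - front \<times> front) \<union> K \<times> prey"

lemma A'_subset: "A' \<subseteq> front \<times> front"
  using D' by (simp add: acyclic_digraph_def digraph_def front_def)

lemma AH_subset: "AH \<subseteq> (VH \<union> I) \<times> (VH \<union> I)"
  using H by (simp add: prey_realization_def)

lemma comp_edges_AH: "comp_edges (VH \<union> I) AH = EH"
  using H by (simp add: prey_realization_def)

lemma K_subset: "K \<subseteq> VG"
  using K by (simp add: is_clique_def)

lemma ordering_H: obtains rest where "acyclic_ordering (VH \<union> I) AH (u1 # u2 # rest)"
  using H by (auto simp: prey_realization_def)

lemma front_inter: "(VH \<union> I) \<inter> front = {u1, u2}"
proof -
  obtain rest where "acyclic_ordering (VH \<union> I) AH (u1 # u2 # rest)" by (rule ordering_H)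
  then have "{u1, u2} \<subseteq> VH \<union> I" by (auto simp: acyclic_ordering_def)
  then show ?thesis using disjoint by (auto simp: front_def)
qed

lemma AH_into_front:
  assumes "(y, x) \<in> AH" "x \<in> front"
  shows "y = u1 \<and> x = u2"
proof -
  obtain rest where "acyclic_ordering (VH \<union> I) AH (u1 # u2 # rest)" by (rule ordering_H)
  moreover have "x \<in> {u1, u2}" using assms AH_subset front_inter by blast
  ultimately show ?thesis using acyclic_ordering_arc_into_first_two AH_subset assms(1) by metis
qed

lemma arcs_into_front: "x \<in> front \<Longrightarrow> (y, x) \<in> arcs \<longleftrightarrow> (y, x) \<in> A'"
  using AH_into_front front_inter by (auto simp: arcs_def prey_def front_def)

lemma arcs_into_back: "x \<notin> front \<Longrightarrow> (y, x) \<in> arcs \<longleftrightarrow> (y, x) \<in> AH \<or> (y \<in> K \<and> x \<in> prey)"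
  using A'_subset by (auto simp: arcs_def)

lemma arcs_subset: "arcs \<subseteq> (VG \<union> (VH \<union> I)) \<times> (VG \<union> (VH \<union> I))"
  using A'_subset AH_subset K_subset front_inter by (auto simp: arcs_def prey_def front_def)

lemma arcs_restrict_front: "arcs \<inter> front \<times> front = A'"
  using arcs_into_front A'_subset by blast

lemma acyclic_ordering_arcs:
  obtains L where "acyclic_ordering (VG \<union> (VH \<union> I)) arcs L" "set (take (card VG + 2) L) = front"
proof -
  obtain rest where ord_H: "acyclic_ordering (VH \<union> I) AH (u1 # u2 # rest)" by (rule ordering_H)
  then have H_list: "distinct (u1 # u2 # rest)" "set (u1 # u2 # rest) = VH \<union> I"
    by (simp_all add: acyclic_ordering_def)
  have rest_front: "front \<inter> set rest = {}"
    using front_inter H_list by auto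
  have "finite front" "acyclic A'"
    using D' by (simp_all add: acyclic_digraph_def digraph_def front_def)
  then obtain L' where L': "acyclic_ordering front A' L'"
    using acyclic_ordering_exists by blast
  then have ord_front: "acyclic_ordering front arcs L'"
    by (rule acyclic_ordering_subset) (use arcs_restrict_front in blast)
  have ord_rest: "acyclic_ordering (set rest) arcs rest"
  proof (rule acyclic_ordering_subset)
    show "acyclic_ordering (set rest) AH rest"
      using acyclic_ordering_Cons[OF acyclic_ordering_Cons[OF ord_H]] by simp
    have "(y, x) \<in> AH" if "(y, x) \<in> arcs" "y \<in> set rest" "x \<in> set rest" for x y
    proof -
      have "x \<notin> front" "y \<notin> K"
        using that(2,3) rest_front K_subset disjoint H_list(2) by auto
      then show ?thesis using arcs_into_back that(1) by blast
    qed
    then show "arcs \<inter> set rest \<times> set rest \<subseteq> AH" by blast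
  qed
  have no_back_arcs: "\<forall>x\<in>front. \<forall>y\<in>set rest. (y, x) \<notin> arcs"
  proof (intro ballI notI)
    fix x y assume "x \<in> front" "y \<in> set rest" "(y, x) \<in> arcs"
    then have "y \<in> front" using arcs_into_front A'_subset by blast
    then show False using \<open>y \<in> set rest\<close> rest_front by blast
  qed
  have "front \<union> set rest = VG \<union> (VH \<union> I)"
    using H_list(2) by (auto simp: front_def)
  then have ord: "acyclic_ordering (VG \<union> (VH \<union> I)) arcs (L' @ rest)"
    using acyclic_ordering_append[OF ord_front ord_rest rest_front no_back_arcs] by simp
  have "u1 \<notin> VG" "u2 \<notin> VG" "u1 \<noteq> u2"
    using disjoint H_list by auto
  moreover have "finite VG"
    using \<open>finite front\<close> by (simp add: front_def)
  ultimately have "card front = card VG + 2"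
    by (simp add: front_def)
  then have "length L' = card VG + 2"
    using L' by (metis acyclic_ordering_def distinct_card)
  then have "take (card VG + 2) (L' @ rest) = L'"
    by simp
  then show ?thesis
    using that[OF ord] L' by (simp add: acyclic_ordering_def)
qed

lemma comp_edges_arcs_subset: "comp_edges (VG \<union> (VH \<union> I)) arcs \<subseteq> ltimes_E EG K VH EH"
proof
  fix p assume "p \<in> comp_edges (VG \<union> (VH \<union> I)) arcs"
  then obtain a b x where p: "p = (a, b)" "a \<noteq> b" and ab: "(a, x) \<in> arcs" "(b, x) \<in> arcs"
    by (auto simp: comp_edges_def)
  show "p \<in> ltimes_E EG K VH EH"
  proof (cases "x \<in> front")
    case True
    then have "(a, x) \<in> A'" "(b, x) \<in> A'"
      using ab arcs_into_front by blast+
    then have "(a, b) \<in> comp_edges (VG \<union> {u1, u2}) A'"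
      using p(2) A'_subset by (auto simp: comp_edges_def front_def)
    then show ?thesis using CD' p(1) by (simp add: ltimes_E_def)
  next
    case False
    then have a: "(a, x) \<in> AH \<or> (a \<in> K \<and> x \<in> prey)" and b: "(b, x) \<in> AH \<or> (b \<in> K \<and> x \<in> prey)"
      using ab arcs_into_back by blast+
    consider "(a, x) \<in> AH" "(b, x) \<in> AH" | "a \<in> K" "b \<in> K"
      | "a \<in> K" "x \<in> prey" "(b, x) \<in> AH" | "b \<in> K" "x \<in> prey" "(a, x) \<in> AH"
      using a b by blast
    then show ?thesis
    proof cases
      case 1
      then have "(a, b) \<in> comp_edges (VH \<union> I) AH"
        using p(2) AH_subset by (auto simp: comp_edges_def)
      then show ?thesis using comp_edges_AH p(1) by (simp add: ltimes_E_def)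
    next
      case 2
      then show ?thesis using K p by (simp add: is_clique_def ltimes_E_def)
    qed (use p in \<open>auto simp: prey_def ltimes_E_def\<close>)
  qed
qed

lemma ltimes_E_subset_comp_edges_arcs: "ltimes_E EG K VH EH \<subseteq> comp_edges (VG \<union> (VH \<union> I)) arcs"
proof -
  have "comp_edges front A' \<subseteq> comp_edges (VG \<union> (VH \<union> I)) arcs"
    by (rule comp_edges_mono) (use front_inter in \<open>auto simp: arcs_def front_def\<close>)
  then have "EG \<subseteq> comp_edges (VG \<union> (VH \<union> I)) arcs"
    using CD' by (simp add: front_def)
  moreover have "(a, b) \<in> comp_edges (VG \<union> (VH \<union> I)) arcs" if ab: "(a, b) \<in> EH" for a b
  proof -
    obtain x where x: "a \<noteq> b" "a \<in> VH \<union> I" "b \<in> VH \<union> I" "(a, x) \<in> AH" "(b, x) \<in> AH"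
      using ab comp_edges_AH by (auto simp: comp_edges_def)
    have "x \<notin> front"
      using AH_into_front x by blast
    then show ?thesis
      using x arcs_into_back by (auto simp: comp_edges_def)
  qed
  moreover have "(u, v) \<in> comp_edges (VG \<union> (VH \<union> I)) arcs \<and> (v, u) \<in> comp_edges (VG \<union> (VH \<union> I)) arcs"
    if "u \<in> K" "v \<in> VH" for u v
  proof -
    obtain x where x: "x \<notin> {u1, u2}" "(v, x) \<in> AH" "\<forall>y. (y, x) \<in> AH \<longrightarrow> y \<in> VH"
      using H \<open>v \<in> VH\<close> by (auto simp: prey_realization_def)
    have "x \<in> VH \<union> I" using x(2) AH_subset by blast
    then have "x \<in> prey" "x \<notin> front"
      using x front_inter by (auto simp: prey_def)
    then have "(u, x) \<in> arcs" "(v, x) \<in> arcs"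
      using arcs_into_back x(2) \<open>u \<in> K\<close> by blast+
    moreover have "u \<in> VG" "u \<noteq> v"
      using that K_subset disjoint by auto
    ultimately show ?thesis
      using \<open>v \<in> VH\<close> by (auto simp: comp_edges_def)
  qed
  ultimately show ?thesis
    by (auto simp: ltimes_E_def)
qed

lemma ltimes_extension:
  "\<exists>A L. acyclic_digraph (VG \<union> (VH \<union> I)) A
     \<and> comp_graph_is (VG \<union> (VH \<union> I)) A (ltimes_V VG VH) (ltimes_E EG K VH EH) I
     \<and> acyclic_ordering (VG \<union> (VH \<union> I)) A L \<and> set (take (card VG + 2) L) = VG \<union> {u1, u2}
     \<and> A \<inter> (set (take (card VG + 2) L) \<times> set (take (card VG + 2) L)) = A'"
proof -
  obtain L where ord: "acyclic_ordering (VG \<union> (VH \<union> I)) arcs L"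
    and front: "set (take (card VG + 2) L) = front"
    by (rule acyclic_ordering_arcs)
  have "finite (VG \<union> (VH \<union> I))"
    using ord by (metis acyclic_ordering_def List.finite_set)
  then have "acyclic_digraph (VG \<union> (VH \<union> I)) arcs"
    using acyclic_ordering_imp_acyclic[OF ord arcs_subset] arcs_subset
    by (simp add: acyclic_digraph_def digraph_def)
  moreover have "comp_graph_is (VG \<union> (VH \<union> I)) arcs (ltimes_V VG VH) (ltimes_E EG K VH EH) I"
    using \<open>finite (VG \<union> (VH \<union> I))\<close> disjoint H comp_edges_arcs_subset ltimes_E_subset_comp_edges_arcs
    by (auto simp: comp_graph_is_def ltimes_V_def prey_realization_def)
  ultimately show ?thesis
    unfolding front_def[symmetric] using ord front arcs_restrict_front
    by (intro exI[of _ arcs] exI[of _ L]) simp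
qed

end

theorem proposition2p5:
  fixes VG VH K :: "'a set" and EG EH A' :: "('a \<times> 'a) set" and u1 u2 :: 'a
  assumes inf: "infinite (UNIV :: 'a set)"
    and G: "graph VG EG" and H: "graph VH EH"
    and cG: "card VG \<ge> 2" and cH: "card VH \<ge> 2"
    and disj: "VG \<inter> VH = {}"
    and K: "is_clique VG EG K"
    and top: "top_two VH EH u1 u2"
    and D': "acyclic_digraph (VG \<union> {u1, u2}) A'"
    and CD': "comp_graph_is (VG \<union> {u1, u2}) A' VG EG {u1, u2}"
    and Hcase: "EH = {} \<or> isolated_free VH EH"
  shows "\<exists>VD A xs.
           acyclic_digraph VD A
         \<and> (EH = {} \<longrightarrow> (\<exists>I. card I = 2 \<and>
               comp_graph_is VD A (ltimes_V VG VH) (ltimes_E EG K VH EH) I))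
         \<and> (isolated_free VH EH \<longrightarrow> (\<exists>I. card I = competition_number VH EH \<and>
               comp_graph_is VD A (ltimes_V VG VH) (ltimes_E EG K VH EH) I))
         \<and> acyclic_ordering VD A xs
         \<and> set (take (card VG + 2) xs) = VG \<union> {u1, u2}
         \<and> A \<inter> (set (take (card VG + 2) xs) \<times> set (take (card VG + 2) xs)) = A'"
proof -
  have EH: "EH \<subseteq> VH \<times> VH" and "VH \<noteq> {}"
    using H cH by (auto simp: graph_def)
  have X: "finite VG" "VH \<inter> VG = {}" "u1 \<notin> VG" "u2 \<notin> VG"
    using G disj CD' by (auto simp: graph_def comp_graph_is_def)
  obtain I AH where I: "I \<inter> VG = {}" "prey_realization VH EH u1 u2 I AH"
    and card: "EH = {} \<longrightarrow> card I = 2" "isolated_free VH EH \<longrightarrow> card I = competition_number VH EH"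
  proof (cases "EH = {}")
    case True
    moreover have "\<not> isolated_free VH EH"
      using True \<open>VH \<noteq> {}\<close> by (auto simp: isolated_free_def)
    ultimately show ?thesis
      using edgeless_prey_realization[OF inf _ X] top that by metis
  next
    case False
    then show ?thesis
      using isolated_free_prey_realization[OF inf top EH _ X] Hcase that by metis
  qed
  interpret ltimes_gluing VG VH K I EG EH A' AH u1 u2
    using D' CD' K disj I by unfold_locales (auto simp: comp_graph_is_def)
  show ?thesis
    using ltimes_extension card by blast
qed

end
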